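(* If a closed properly convex domain $\Omega\subset\mathbb{RP}^n$ is preserved by a linear flow $\Phi$, then $\Omega$ is reducible and $\Phi$ is hyperbolic.
   Context: $\Omega$ is properly convex if its closure is a compact convex subset of some affine chart. A properly convex set $\Omega$ is reducible if there are disjoint proper projective subspaces $\mathbb{RP}^a,\mathbb{RP}^b\subsetneq\mathbb{RP}^n$ such that every point of $\Omega$ lies on a line segment in $\Omega$ with one endpoint in $\mathbb{RP}^a\cap\mathrm{cl}\,\Omega$ and the other in $\mathbb{RP}^b\cap\mathrm{cl}\,\Omega$. A linear flow is an injective homomorphism $\Phi:\mathbb{R}\to\mathrm{PGL}(n+1,\mathbb{R})$ such that the orbit of every point is a proper subset of a projective line. It is hyperbolic if, after reparameterizing by an isomorphism of $\mathbb{R}$, there is a decomposition $\mathbb{R}^{n+1}=A\oplus B$ with $\Phi_t[a+b]=[a+e^tb]$ for $a\in A$, $b\in B$. *)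

theory Defs
  imports "HOL-Analysis.Analysis"
begin

text \<open>Model of RP^n: R^(n+1) is the type real^'n (n+1 = CARD('n)).
  A subset of RP^n is represented by its cone of nonzero representatives,
  i.e. a set of nonzero vectors closed under nonzero scaling.\<close>

definition proj_cone :: "'a::real_vector set \<Rightarrow> bool" where
  "proj_cone S \<longleftrightarrow> 0 \<notin> S \<and> (\<forall>v\<in>S. \<forall>c. c \<noteq> 0 \<longrightarrow> c *\<^sub>R v \<in> S)"

text \<open>Closure in RP^n (preimage of the projective closure).\<close>
definition proj_closure :: "'a::real_normed_vector set \<Rightarrow> 'a set" where
  "proj_closure S = closure S - {0}"

text \<open>Properly convex: the closure lies in the affine chart {[v]. w . v \<noteq> 0},
  and its image in that chart (identified with the affine hyperplane
  {v. w . v = 1}) is compact and convex.\<close>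
definition properly_convex :: "'a::real_inner set \<Rightarrow> bool" where
  "properly_convex S \<longleftrightarrow>
     (\<exists>w. (\<forall>v\<in>proj_closure S. inner w v \<noteq> 0)
        \<and> compact {v \<in> proj_closure S. inner w v = 1}
        \<and> convex {v \<in> proj_closure S. inner w v = 1})"

definition closed_properly_convex_domain :: "'a::real_inner set \<Rightarrow> bool" where
  "closed_properly_convex_domain S \<longleftrightarrow>
     proj_cone S \<and> proj_closure S = S \<and> interior S \<noteq> {} \<and> properly_convex S"

text \<open>A projective segment between [p],[q] is the image of the segment from p to q
  for suitable representatives p, q.\<close>
definition reducible :: "'a::real_inner set \<Rightarrow> bool" where
  "reducible S \<longleftrightarrow>
     (\<exists>U V. subspace U \<and> subspace V \<and> U \<noteq> {0} \<and> V \<noteq> {0}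
        \<and> U \<noteq> UNIV \<and> V \<noteq> UNIV \<and> U \<inter> V = {0}
        \<and> (\<forall>x\<in>S. \<exists>p q. p \<in> U \<inter> proj_closure S \<and> q \<in> V \<inter> proj_closure S
              \<and> open_segment p q \<subseteq> S
              \<and> (\<exists>y\<in>closed_segment p q. \<exists>c. c \<noteq> 0 \<and> x = c *\<^sub>R y)))"

text \<open>A (continuous) homomorphism R \<rightarrow> PGL(n+1,R) given by a continuous family of
  invertible matrices representing it (projective homomorphism: up to scalars).\<close>
definition linear_flow :: "(real \<Rightarrow> real^'n^'n) \<Rightarrow> bool" where
  "linear_flow M \<longleftrightarrow>
     continuous_on UNIV M
   \<and> (\<forall>t. invertible (M t))
   \<and> (\<forall>s t. \<exists>c. c \<noteq> 0 \<and> M (s + t) = c *\<^sub>R (M s ** M t))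
   \<and> (\<forall>s t c. M s = c *\<^sub>R M t \<longrightarrow> s = t)
   \<and> (\<forall>v::real^'n. v \<noteq> 0 \<longrightarrow>
        (\<exists>W. subspace W \<and> dim W = 2 \<and>
             {c *\<^sub>R (M t *v v) | c t. c \<noteq> 0} \<subset> W - {0}))"

definition hyperbolic_flow :: "(real \<Rightarrow> real^'n^'n) \<Rightarrow> bool" where
  "hyperbolic_flow M \<longleftrightarrow>
     (\<exists>lam A B. lam \<noteq> 0 \<and> subspace A \<and> subspace B \<and> A \<inter> B = {0}
        \<and> {a + b | a b. a \<in> A \<and> b \<in> B} = UNIV
        \<and> (\<forall>t. \<forall>a\<in>A. \<forall>b\<in>B. a + b \<noteq> 0 \<longrightarrow>
              (\<exists>c. c \<noteq> 0 \<and> M (lam * t) *v (a + b) = c *\<^sub>R (a + exp t *\<^sub>R b))))"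

definition preserves :: "(real \<Rightarrow> real^'n^'n) \<Rightarrow> (real^'n) set \<Rightarrow> bool" where
  "preserves M S \<longleftrightarrow> (\<forall>t. (\<lambda>v. M t *v v) ` S = S)"

end

theory Submission
  imports Defs
begin

text \<open>Every interior point \<open>x\<close> of \<open>\<Omega>\<close> lies in the span of the common eigenvectors of the
  flow. Otherwise the orbit of \<open>x\<close> spans an invariant plane \<open>W\<close>; projectively, \<open>\<Omega> \<inter> W\<close> is a
  compact segment whose two endpoints every \<open>M t\<close> permutes, and as \<open>M t\<close> is a multiple of
  \<open>M (t/2)\<^sup>2\<close> it fixes both, so they are common eigenvectors spanning \<open>x\<close>. Since \<open>\<Omega>\<close> has
  interior, common eigenvectors span the whole space. There cannot be three different eigenvalue
  functions (characters), because the orbit of a sum of three such eigenvectors would not lie in a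
  plane. So the space is \<open>A \<oplus> B\<close> for two common eigenspaces, and the ratio of their characters is
  a continuous homomorphism from \<open>\<real>\<close> to the positive reals, i.e. \<open>exp (\<kappa> t)\<close> with \<open>\<kappa> \<noteq> 0\<close>:
  the flow is hyperbolic. Finally \<open>\<Omega>\<close> is invariant under \<open>a + b \<mapsto> a + r b\<close> for \<open>r > 0\<close>; letting
  \<open>r\<close> tend to \<open>0\<close> and to \<open>\<infinity>\<close> shows that both components of a point of \<open>\<Omega>\<close> lie in \<open>\<Omega>\<close>, which
  yields the segments exhibiting reducibility.\<close>

section \<open>Real functional equations and linear algebra\<close>

lemma continuous_additive_real_linear:
  fixes g :: "real \<Rightarrow> real"
  assumes add: "\<And>s t. g (s + t) = g s + g t" and cont: "continuous_on UNIV g"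
  shows "g t = g 1 * t"
proof -
  have g0: "g 0 = 0" using add[of 0 0] by simp
  have g_nat: "g (real n * t) = real n * g t" for n t
    by (induction n) (auto simp: g0 distrib_right add)
  have g_int: "g (of_int k * t) = of_int k * g t" for k t
  proof (cases "k \<ge> 0")
    case True
    then obtain n where "k = int n" using nonneg_int_cases by blast
    then show ?thesis using g_nat[of n t] by simp
  next
    case False
    then have "k \<le> 0" by simp
    then obtain n where n: "k = - int n" using nonpos_int_cases by blast
    have "g (- (real n * t)) = - g (real n * t)" using add[of "real n * t" "- (real n * t)"] g0 by simp
    then show ?thesis using n g_nat[of n t] by simp
  qed
  have g_rat: "g r = g 1 * r" if r: "r \<in> \<rat>" for r
  proof -
    obtain a b where ab: "b > 0" "r = of_int a / of_int b" by (rule Rats_cases'[OF r]) blast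
    have "of_int b * g r = g (of_int a)" using g_int[of b r] ab by simp
    also have "\<dots> = of_int a * g 1" using g_int[of a 1] by simp
    finally have h: "of_int b * g r = of_int a * g 1" .
    have "g r = (of_int b * g r) / of_int b" using ab(1) by simp
    also have "\<dots> = (of_int a / of_int b) * g 1" unfolding h by simp
    finally show ?thesis using ab(2) by simp
  qed
  have cont_diff: "continuous_on (closure \<rat>) (\<lambda>t. g t - g 1 * t)"
    unfolding Rats_closure_real by (intro continuous_intros cont)
  have t: "t \<in> closure \<rat>" unfolding Rats_closure_real by simp
  have "g t - g 1 * t = 0"
  proof (rule continuous_constant_on_closure[OF cont_diff _ t])
    show "g x - g 1 * x = 0" if "x \<in> \<rat>" for x using g_rat[OF that] by simp
  qed
  then show ?thesis by simp
qed

lemma continuous_multiplicative_eq_exp: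
  fixes \<rho> :: "real \<Rightarrow> real"
  assumes mult: "\<And>s t. \<rho> (s + t) = \<rho> s * \<rho> t" and nz: "\<And>t. \<rho> t \<noteq> 0"
    and cont: "continuous_on UNIV \<rho>"
  obtains \<kappa> where "\<And>t. \<rho> t = exp (\<kappa> * t)"
proof -
  have pos: "\<rho> t > 0" for t
  proof -
    have "\<rho> t = \<rho> (t/2) * \<rho> (t/2)" using mult[of "t/2" "t/2"] by simp
    then show ?thesis using nz[of "t/2"] not_real_square_gt_zero by metis
  qed
  have "ln (\<rho> t) = ln (\<rho> 1) * t" for t
  proof (rule continuous_additive_real_linear)
    show "ln (\<rho> (s + t)) = ln (\<rho> s) + ln (\<rho> t)" for s t using pos[of s] pos[of t] by (simp add: mult ln_mult)
    show "continuous_on UNIV (\<lambda>t. ln (\<rho> t))" by (intro continuous_on_ln cont) (simp add: nz)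
  qed
  then have "\<rho> t = exp (ln (\<rho> 1) * t)" for t by (metis exp_ln pos)
  then show ?thesis by (rule that)
qed

lemma multiplicative_proportional_cases:
  fixes f g :: "'a::plus \<Rightarrow> 'b::field"
  assumes f: "\<And>s t. f (s + t) = f s * f t" and g: "\<And>s t. g (s + t) = g s * g t"
    and cross: "\<And>s t. (f s - 1) * (g t - 1) = (g s - 1) * (f t - 1)"
    and "f u \<noteq> 1"
  shows "(\<forall>t. g t = 1) \<or> (\<forall>t. g t = f t)"
proof -
  define k where "k = (g u - 1) / (f u - 1)"
  have gk: "g t = k * (f t - 1) + 1" for t
    using cross[of u t] \<open>f u \<noteq> 1\<close> by (simp add: k_def field_simps)
  have "k * (f u * f u - 1) + 1 = (k * (f u - 1) + 1) * (k * (f u - 1) + 1)"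
    using gk[of "u + u"] gk[of u] g[of u u] f[of u u] by simp
  then have "(k * k - k) * ((f u - 1) * (f u - 1)) = 0"
    by algebra
  then have "k = 0 \<or> k = 1" using \<open>f u \<noteq> 1\<close> by simp
  then show ?thesis using gk by auto
qed

lemma collinear_of_common_affine_relation:
  fixes a b c x1 x2 x3 y1 y2 y3 :: real
  assumes "a + b * x1 + c * y1 = 0" "a + b * x2 + c * y2 = 0" "a + b * x3 + c * y3 = 0"
    and "(a, b, c) \<noteq> (0, 0, 0)"
  shows "(x2 - x1) * (y3 - y1) = (x3 - x1) * (y2 - y1)"
proof -
  define D where "D = (x2 - x1) * (y3 - y1) - (x3 - x1) * (y2 - y1)"
  have "b * (x2 - x1) + c * (y2 - y1) = 0" "b * (x3 - x1) + c * (y3 - y1) = 0"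
    using assms(1-3) by (simp_all add: algebra_simps)
  then have "D * b = 0" "D * c = 0" unfolding D_def by algebra+
  moreover have "b \<noteq> 0 \<or> c \<noteq> 0" using assms(1,4) by auto
  ultimately have "D = 0" by auto
  then show ?thesis unfolding D_def by simp
qed

lemma three_vectors_dependent:
  fixes u1 u2 u3 :: "'a::euclidean_space"
  assumes "dim W \<le> 2" and "u1 \<in> W" "u2 \<in> W" "u3 \<in> W"
  obtains a b c where "(a, b, c) \<noteq> (0, 0, 0)" and "a *\<^sub>R u1 + b *\<^sub>R u2 + c *\<^sub>R u3 = 0"
proof (cases "u1 = u2 \<or> u1 = u3 \<or> u2 = u3")
  case True
  then show ?thesis
  proof (elim disjE)
    assume "u1 = u2" then show ?thesis by (intro that[of 1 "-1" 0]) simp_all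
  next
    assume "u1 = u3" then show ?thesis by (intro that[of 1 0 "-1"]) simp_all
  next
    assume "u2 = u3" then show ?thesis by (intro that[of 0 1 "-1"]) simp_all
  qed
next
  case False
  then have "card {u1, u2, u3} = 3" by auto
  then have "dependent {u1, u2, u3}"
    using independent_card_le_dim[of "{u1, u2, u3}" W] assms by auto
  then obtain f where f: "\<exists>v\<in>{u1, u2, u3}. f v \<noteq> 0" "(\<Sum>v\<in>{u1, u2, u3}. f v *\<^sub>R v) = 0"
    using dependent_finite[of "{u1, u2, u3}"] by auto
  moreover have "(\<Sum>v\<in>{u1, u2, u3}. f v *\<^sub>R v) = f u1 *\<^sub>R u1 + f u2 *\<^sub>R u2 + f u3 *\<^sub>R u3"
    using False by (simp add: add.assoc)
  ultimately show ?thesis using that[of "f u1" "f u2" "f u3"] by auto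
qed

lemma linear_inj_square_preserves_line:
  fixes f :: "'a::real_vector \<Rightarrow> 'a"
  assumes f: "linear f" "inj f"
    and pq: "p \<notin> span {q}" "q \<notin> span {p}"
    and fp: "f p \<in> span {p} \<union> span {q}" and fq: "f q \<in> span {p} \<union> span {q}"
  shows "f (f p) \<in> span {p}"
proof -
  have scale: "f (c *\<^sub>R v) = c *\<^sub>R f v" for c v using linear_cmul[OF f(1)] .
  obtain c where fp': "f p = c *\<^sub>R p \<or> f p = c *\<^sub>R q" using fp by (auto simp: span_singleton)
  obtain d where fq': "f q = d *\<^sub>R p \<or> f q = d *\<^sub>R q" using fq by (auto simp: span_singleton)
  consider "f p = c *\<^sub>R p" | "f p = c *\<^sub>R q" "f q = d *\<^sub>R p" | "f p = c *\<^sub>R q" "f q = d *\<^sub>R q"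
    using fp' fq' by blast
  then show ?thesis
  proof cases
    case 1
    then show ?thesis by (simp add: scale span_scale span_base)
  next
    case 2
    then show ?thesis by (simp add: scale span_scale span_base)
  next
    case 3
    have "d \<noteq> 0"
    proof
      assume "d = 0"
      then have "f q = f 0" using 3 f(1) by (simp add: linear_0)
      then show False using pq(2) injD[OF f(2)] by (metis span_zero)
    qed
    then have "f p = f ((c / d) *\<^sub>R q)" using 3 by (simp add: scale)
    then have "p = (c / d) *\<^sub>R q" using injD[OF f(2)] by blast
    then show ?thesis using pq(1) span_scale span_base by blast
  qed
qed

lemma plane_basis_with_kernel_vector:
  fixes w x :: "'a::euclidean_space"
  assumes W: "subspace W" "dim W = 2" and x: "x \<in> W" "inner w x \<noteq> 0"
  obtains y where "y \<in> W" "y \<noteq> 0" "inner w y = 0" "W \<subseteq> span {x, y}"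
proof -
  have "\<not> W \<subseteq> span {x}"
  proof
    assume "W \<subseteq> span {x}"
    then have "dim W \<le> card {x}" using dim_le_card[of W "{x}"] by simp
    then show False using W(2) by simp
  qed
  then obtain z where z: "z \<in> W" "z \<notin> span {x}" by blast
  define y where "y = inner w z *\<^sub>R x - inner w x *\<^sub>R z"
  have y: "y \<in> W" using W(1) x(1) z(1) by (simp add: y_def subspace_diff subspace_scale)
  have wy: "inner w y = 0" by (simp add: y_def inner_diff_right)
  have "y \<noteq> 0"
  proof
    assume "y = 0"
    then have "inner w x *\<^sub>R z = inner w z *\<^sub>R x" by (simp add: y_def)
    then have "(1 / inner w x) *\<^sub>R (inner w x *\<^sub>R z) = (1 / inner w x) *\<^sub>R (inner w z *\<^sub>R x)"
      by simp
    then have "z = (inner w z / inner w x) *\<^sub>R x" using x(2) by simp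
    then show False using z(2) span_base span_scale by (metis singletonI)
  qed
  have x0: "x \<noteq> 0" using x(2) by auto
  have "y \<notin> span {x}"
  proof
    assume "y \<in> span {x}"
    then obtain c where "y = c *\<^sub>R x" by (auto simp: span_singleton)
    then show False using wy x(2) \<open>y \<noteq> 0\<close> by simp
  qed
  then have "independent {y, x}" using x0 by (simp add: independent_insert)
  then have "independent {x, y}" by (simp add: insert_commute)
  moreover have "card {x, y} = dim W" using W(2) wy x(2) by (cases "x = y") auto
  ultimately have "W \<subseteq> span {x, y}" using card_eq_dim[of "{x, y}" W] x(1) y by simp
  then show ?thesis using that y \<open>y \<noteq> 0\<close> wy by blast
qed

lemma open_meets_sum_with_nonzero_summands:
  fixes U :: "'a::real_normed_vector set"
  assumes U: "open U" "U \<noteq> {}" and A: "subspace A" "A \<noteq> {0}" and B: "subspace B" "B \<noteq> {0}"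
    and sum: "\<And>v. \<exists>a\<in>A. \<exists>b\<in>B. v = a + b"
  obtains a b where "a \<in> A" "b \<in> B" "a \<noteq> 0" "b \<noteq> 0" "a + b \<in> U"
proof -
  obtain x e where "e > 0" "ball x e \<subseteq> U" using U by (meson ex_in_conv openE)
  obtain a b where ab: "a \<in> A" "b \<in> B" "x = a + b" using sum by blast
  have nudge: "\<exists>u'\<in>S. u' \<noteq> 0 \<and> norm (u' - u) \<le> e / 3"
    if S: "subspace S" "S \<noteq> {0}" "u \<in> S" for S u
  proof (cases "u = 0")
    case True
    obtain d where "d \<in> S" "d \<noteq> 0" using S(1,2) subspace_0 by blast
    then show ?thesis using True \<open>e > 0\<close> S(1)
      by (intro bexI[of _ "(e / 3 / norm d) *\<^sub>R d"]) (auto intro: subspace_scale)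
  qed (use S \<open>e > 0\<close> in auto)
  obtain a' b' where a': "a' \<in> A" "a' \<noteq> 0" "norm (a' - a) \<le> e / 3"
    and b': "b' \<in> B" "b' \<noteq> 0" "norm (b' - b) \<le> e / 3"
    using nudge[OF A ab(1)] nudge[OF B ab(2)] by blast
  have "dist x (a' + b') \<le> norm (a' - a) + norm (b' - b)"
    using norm_triangle_ineq[of "a' - a" "b' - b"] by (simp add: ab dist_norm norm_minus_commute algebra_simps)
  then have "a' + b' \<in> U" using a' b' \<open>e > 0\<close> \<open>ball x e \<subseteq> U\<close> by auto
  then show ?thesis using that a' b' by blast
qed

section \<open>Cones over closed properly convex sets\<close>

locale properly_convex_cone =
  fixes \<Omega> :: "'a::euclidean_space set" and w :: 'a
  assumes cone: "proj_cone \<Omega>" and closed: "proj_closure \<Omega> = \<Omega>"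
    and chart: "\<And>v. v \<in> \<Omega> \<Longrightarrow> inner w v \<noteq> 0"
    and slice_compact: "compact {v \<in> \<Omega>. inner w v = 1}"
    and slice_convex: "convex {v \<in> \<Omega>. inner w v = 1}"
begin

lemma zero_not_mem: "0 \<notin> \<Omega>"
  using cone by (simp add: proj_cone_def)

lemma scaleR_mem_iff:
  assumes "c \<noteq> 0" shows "c *\<^sub>R v \<in> \<Omega> \<longleftrightarrow> v \<in> \<Omega>"
proof
  assume "c *\<^sub>R v \<in> \<Omega>"
  moreover have "inverse c \<noteq> 0" using assms by simp
  ultimately have "inverse c *\<^sub>R c *\<^sub>R v \<in> \<Omega>" using cone unfolding proj_cone_def by blast
  then show "v \<in> \<Omega>" using assms by simp
qed (use cone assms in \<open>simp add: proj_cone_def\<close>)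

lemma closure_mem: "v \<in> closure \<Omega> \<Longrightarrow> v \<noteq> 0 \<Longrightarrow> v \<in> \<Omega>"
  using closed by (auto simp: proj_closure_def)

lemma closed_segment_subset_pos:
  assumes u: "u \<in> \<Omega>" "inner w u > 0" and v: "v \<in> \<Omega>" "inner w v > 0"
  shows "closed_segment u v \<subseteq> \<Omega>"
proof
  fix p assume "p \<in> closed_segment u v"
  then obtain \<theta> where \<theta>: "0 \<le> \<theta>" "\<theta> \<le> 1" and p: "p = (1 - \<theta>) *\<^sub>R u + \<theta> *\<^sub>R v"
    unfolding closed_segment_def by auto
  define a where "a = (1 - \<theta>) * inner w u"
  define b where "b = \<theta> * inner w v"
  have "a \<ge> 0" "b \<ge> 0" using \<theta> u(2) v(2) by (simp_all add: a_def b_def)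
  have "a + b > 0"
  proof (cases "\<theta> = 0")
    case False
    then have "b > 0" using \<theta> v(2) by (simp add: b_def)
    then show ?thesis using \<open>a \<ge> 0\<close> by simp
  qed (use u(2) in \<open>simp add: a_def b_def\<close>)
  define u' where "u' = (1 / inner w u) *\<^sub>R u"
  define v' where "v' = (1 / inner w v) *\<^sub>R v"
  have slice: "u' \<in> {v \<in> \<Omega>. inner w v = 1}" "v' \<in> {v \<in> \<Omega>. inner w v = 1}"
    using u v scaleR_mem_iff by (auto simp: u'_def v'_def)
  have "(a / (a + b)) *\<^sub>R u' + (b / (a + b)) *\<^sub>R v' \<in> \<Omega>"
    using convexD[OF slice_convex slice, of "a / (a + b)" "b / (a + b)"] \<open>a \<ge> 0\<close> \<open>b \<ge> 0\<close> \<open>a + b > 0\<close>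
    by (simp add: add_divide_distrib[symmetric])
  moreover have "p = (a + b) *\<^sub>R ((a / (a + b)) *\<^sub>R u' + (b / (a + b)) *\<^sub>R v')"
    using \<open>a + b > 0\<close> u(2) v(2) by (simp add: p u'_def v'_def a_def b_def scaleR_add_right)
  ultimately show "p \<in> \<Omega>" using scaleR_mem_iff \<open>a + b > 0\<close> by simp
qed

lemma closed_segment_subset:
  assumes "u \<in> \<Omega>" "v \<in> \<Omega>" "inner w u * inner w v > 0"
  shows "closed_segment u v \<subseteq> \<Omega>"
proof (cases "inner w u > 0")
  case True
  then show ?thesis using closed_segment_subset_pos assms by (simp add: zero_less_mult_iff)
next
  case False
  then have "closed_segment (- u) (- v) \<subseteq> \<Omega>"
    using closed_segment_subset_pos[of "- u" "- v"] assms scaleR_mem_iff[of "- 1"]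
    by (auto simp: zero_less_mult_iff)
  moreover have "closed_segment u v = uminus ` closed_segment (- u) (- v)"
    using closed_segment_linear_image[OF linear_uminus, of "- u" "- v"] by simp
  ultimately show ?thesis using scaleR_mem_iff[of "- 1"] by auto
qed

lemma bounded_line_section:
  assumes "inner w x \<noteq> 0" "y \<noteq> 0" "inner w y = 0"
  shows "bounded {s. x + s *\<^sub>R y \<in> \<Omega>}"
proof -
  obtain a where a: "\<And>v. v \<in> {v \<in> \<Omega>. inner w v = 1} \<Longrightarrow> norm v \<le> a"
    using compact_imp_bounded[OF slice_compact] unfolding bounded_iff by blast
  have "\<bar>s\<bar> * norm y \<le> a * \<bar>inner w x\<bar> + norm x" if s: "x + s *\<^sub>R y \<in> \<Omega>" for s
  proof -
    have "(1 / inner w x) *\<^sub>R (x + s *\<^sub>R y) \<in> {v \<in> \<Omega>. inner w v = 1}"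
      using s assms(1,3) scaleR_mem_iff[of "1 / inner w x"] by (simp add: inner_add_right)
    then have "norm ((1 / inner w x) *\<^sub>R (x + s *\<^sub>R y)) \<le> a" by (rule a)
    then have "norm (x + s *\<^sub>R y) \<le> a * \<bar>inner w x\<bar>" using assms(1) by (simp add: divide_le_eq)
    moreover have "\<bar>s\<bar> * norm y \<le> norm (x + s *\<^sub>R y) + norm x"
      using norm_triangle_ineq4[of "x + s *\<^sub>R y" x] by simp
    ultimately show ?thesis by linarith
  qed
  then have "\<bar>s\<bar> \<le> (a * \<bar>inner w x\<bar> + norm x) / norm y" if "x + s *\<^sub>R y \<in> \<Omega>" for s
    using that assms(2) by (simp add: pos_le_divide_eq)
  then show ?thesis unfolding bounded_real by blast
qed

lemma closed_line_section:
  assumes "inner w x \<noteq> 0" "inner w y = 0"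
  shows "closed {s. x + s *\<^sub>R y \<in> \<Omega>}"
proof -
  have "inner w (x + s *\<^sub>R y) \<noteq> 0" for s using assms by (simp add: inner_add_right)
  then have "x + s *\<^sub>R y \<noteq> 0" for s by (metis inner_zero_right)
  then have "{s. x + s *\<^sub>R y \<in> \<Omega>} = (\<lambda>s. x + s *\<^sub>R y) -` closure \<Omega>"
    using closure_subset closure_mem by blast
  moreover have "continuous_on UNIV (\<lambda>s. x + s *\<^sub>R y)" by (intro continuous_intros)
  ultimately show ?thesis by (simp add: closed_vimage)
qed

lemma convex_line_section:
  assumes "inner w x \<noteq> 0" "inner w y = 0"
  shows "convex {s. x + s *\<^sub>R y \<in> \<Omega>}"
proof (rule convexI)
  fix s s' \<alpha> \<beta> :: real
  assume on_line: "s \<in> {s. x + s *\<^sub>R y \<in> \<Omega>}" "s' \<in> {s. x + s *\<^sub>R y \<in> \<Omega>}"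
    and \<alpha>\<beta>: "0 \<le> \<alpha>" "0 \<le> \<beta>" "\<alpha> + \<beta> = 1"
  have "inner w (x + s *\<^sub>R y) * inner w (x + s' *\<^sub>R y) > 0"
    using assms by (simp add: inner_add_right not_square_less_zero less_le)
  then have "closed_segment (x + s *\<^sub>R y) (x + s' *\<^sub>R y) \<subseteq> \<Omega>"
    using closed_segment_subset on_line by simp
  moreover have "\<alpha> *\<^sub>R (x + s *\<^sub>R y) + \<beta> *\<^sub>R (x + s' *\<^sub>R y) \<in> closed_segment (x + s *\<^sub>R y) (x + s' *\<^sub>R y)"
    using \<alpha>\<beta> unfolding closed_segment_def by (intro CollectI exI[of _ \<beta>]) (simp add: eq_diff_eq)
  moreover have "\<alpha> *\<^sub>R (x + s *\<^sub>R y) + \<beta> *\<^sub>R (x + s' *\<^sub>R y) = x + (\<alpha> * s + \<beta> * s') *\<^sub>R y"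
    using \<alpha>\<beta>(3) by (simp add: algebra_simps flip: scaleR_add_left)
  ultimately show "\<alpha> *\<^sub>R s + \<beta> *\<^sub>R s' \<in> {s. x + s *\<^sub>R y \<in> \<Omega>}" by auto
qed

lemma line_section_interval:
  assumes x: "x \<in> interior \<Omega>" and y: "y \<noteq> 0" "inner w y = 0"
  obtains s1 s2 where "s1 < s2" "\<And>s. x + s *\<^sub>R y \<in> \<Omega> \<longleftrightarrow> s1 \<le> s \<and> s \<le> s2"
proof -
  define I where "I = {s. x + s *\<^sub>R y \<in> \<Omega>}"
  have "inner w x \<noteq> 0" using chart x interior_subset by blast
  then have "compact I" "connected I"
    using bounded_line_section closed_line_section convex_line_section y
    by (simp_all add: I_def compact_eq_bounded_closed convex_connected)
  then obtain s1 s2 where I: "I = {s1..s2}" using connected_compact_interval_1 by blast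
  obtain e where e: "e > 0" "ball x e \<subseteq> \<Omega>" using x mem_interior by blast
  define d where "d = e / (2 * norm y)"
  have "d > 0" using e(1) y(1) by (simp add: d_def)
  have "s \<in> I" if s: "\<bar>s\<bar> = d" for s
  proof -
    have "dist x (x + s *\<^sub>R y) = \<bar>s\<bar> * norm y" by (simp add: dist_norm)
    also have "\<dots> = e / 2" using s y(1) by (simp add: d_def)
    finally have "x + s *\<^sub>R y \<in> ball x e" using e(1) by simp
    then show ?thesis using e(2) by (auto simp: I_def)
  qed
  then have "- d \<in> I" "d \<in> I" using \<open>d > 0\<close> by simp_all
  then have "s1 < s2" using I \<open>d > 0\<close> by auto
  moreover have "x + s *\<^sub>R y \<in> \<Omega> \<longleftrightarrow> s \<in> I" for s by (simp add: I_def)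
  ultimately show ?thesis using that I by simp
qed

text \<open>Projectively, the endpoints of the segment \<open>\<Omega> \<inter> W\<close>. The description involves only \<open>\<Omega>\<close>
  and the linear structure, so it is preserved by linear maps preserving \<open>\<Omega>\<close> and \<open>W\<close>.\<close>
definition boundary_within :: "'a set \<Rightarrow> 'a \<Rightarrow> bool" where
  "boundary_within W v \<longleftrightarrow> v \<in> \<Omega> \<inter> W \<and> (\<exists>u\<in>W. \<forall>e>0. v + e *\<^sub>R u \<notin> \<Omega>)"

lemma boundary_within_line_section:
  assumes x: "x \<in> \<Omega>" and y: "y \<in> W" "inner w y = 0" and W: "W \<subseteq> span {x, y}"
    and on_line: "\<And>s. x + s *\<^sub>R y \<in> \<Omega> \<longleftrightarrow> s1 \<le> s \<and> s \<le> s2"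
    and v: "boundary_within W v"
  shows "v \<in> span {x + s1 *\<^sub>R y} \<union> span {x + s2 *\<^sub>R y}"
proof -
  have span_xy: "\<exists>a b. u = a *\<^sub>R x + b *\<^sub>R y" if u: "u \<in> W" for u
  proof -
    obtain a b where "u - a *\<^sub>R x = b *\<^sub>R y"
      using u W by (auto simp: span_insert span_singleton)
    then have "u = a *\<^sub>R x + b *\<^sub>R y" by (simp add: algebra_simps)
    then show ?thesis by blast
  qed
  obtain u where u: "u \<in> W" "\<And>e. e > 0 \<Longrightarrow> v + e *\<^sub>R u \<notin> \<Omega>"
    using v by (auto simp: boundary_within_def)
  have "v \<in> W" using v by (simp add: boundary_within_def)
  then obtain \<alpha> \<beta> where v_xy: "v = \<alpha> *\<^sub>R x + \<beta> *\<^sub>R y" using span_xy by blast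
  obtain \<gamma> \<delta> where u_xy: "u = \<gamma> *\<^sub>R x + \<delta> *\<^sub>R y" using span_xy u(1) by blast
  have "inner w v = \<alpha> * inner w x" using y(2) by (simp add: v_xy inner_add_right)
  then have "\<alpha> \<noteq> 0" using chart v by (auto simp: boundary_within_def)
  define s where "s = \<beta> / \<alpha>"
  have v_s: "v = \<alpha> *\<^sub>R (x + s *\<^sub>R y)" using \<open>\<alpha> \<noteq> 0\<close> by (simp add: v_xy s_def scaleR_add_right)
  then have "s1 \<le> s" "s \<le> s2"
    using v on_line scaleR_mem_iff[OF \<open>\<alpha> \<noteq> 0\<close>] by (auto simp: boundary_within_def)
  show ?thesis
  proof (cases "s = s1 \<or> s = s2")
    case True
    then show ?thesis using v_s span_base span_scale by (metis UnI1 UnI2 singletonI)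
  next
    case False
    with \<open>s1 \<le> s\<close> \<open>s \<le> s2\<close> have s: "s1 < s" "s < s2" by auto
    \<comment> \<open>\<open>v\<close> is projectively inside the segment, so \<open>v + e u\<close> stays in \<open>\<Omega>\<close> for small \<open>e > 0\<close>\<close>
    define f where "f e = (\<beta> + e * \<delta>) / (\<alpha> + e * \<gamma>)" for e :: real
    have "((\<lambda>e. \<alpha> + e * \<gamma>) \<longlongrightarrow> \<alpha>) (at_right 0)"
      by (rule tendsto_eq_intros) (auto intro!: tendsto_eq_intros)
    moreover have "(f \<longlongrightarrow> s) (at_right 0)"
      unfolding f_def s_def using \<open>\<alpha> \<noteq> 0\<close> by (auto intro!: tendsto_eq_intros)
    ultimately have "\<forall>\<^sub>F e in at_right 0. 0 < e \<and> \<alpha> + e * \<gamma> \<noteq> 0 \<and> s1 < f e \<and> f e < s2"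
      using eventually_at_right_less tendsto_imp_eventually_ne[OF _ \<open>\<alpha> \<noteq> 0\<close>]
        order_tendstoD[OF _ s(1)] order_tendstoD[OF _ s(2)] by (intro eventually_conj) auto
    then obtain e where e: "0 < e" "\<alpha> + e * \<gamma> \<noteq> 0" "s1 < f e" "f e < s2"
      using eventually_happens trivial_limit_at_right_real by blast
    have "v + e *\<^sub>R u = (\<alpha> + e * \<gamma>) *\<^sub>R x + (\<beta> + e * \<delta>) *\<^sub>R y"
      by (simp add: v_xy u_xy algebra_simps)
    also have "\<dots> = (\<alpha> + e * \<gamma>) *\<^sub>R (x + f e *\<^sub>R y)"
      using e(2) by (simp add: f_def scaleR_add_right)
    finally have "v + e *\<^sub>R u = (\<alpha> + e * \<gamma>) *\<^sub>R (x + f e *\<^sub>R y)" .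
    then have "v + e *\<^sub>R u \<in> \<Omega>" using e on_line scaleR_mem_iff by simp
    then show ?thesis using u(2)[OF e(1)] by simp
  qed
qed

lemma planar_section_boundary:
  assumes W: "subspace W" "dim W = 2" and x: "x \<in> W" "x \<in> interior \<Omega>"
  obtains p q where "p \<notin> span {q}" "q \<notin> span {p}" "x \<in> span {p, q}"
    "boundary_within W p" "boundary_within W q"
    "\<And>v. boundary_within W v \<Longrightarrow> v \<in> span {p} \<union> span {q}"
proof -
  have x\<Omega>: "x \<in> \<Omega>" using x interior_subset by blast
  obtain y where y: "y \<in> W" "y \<noteq> 0" "inner w y = 0" and W_xy: "W \<subseteq> span {x, y}"
    using plane_basis_with_kernel_vector[OF W x(1) chart[OF x\<Omega>]] by blast
  obtain s1 s2 where "s1 < s2" and on_line: "\<And>s. x + s *\<^sub>R y \<in> \<Omega> \<longleftrightarrow> s1 \<le> s \<and> s \<le> s2"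
    using line_section_interval[OF x(2) y(2,3)] by blast
  define p where "p = x + s1 *\<^sub>R y"
  define q where "q = x + s2 *\<^sub>R y"
  have line_W: "x + s *\<^sub>R y \<in> W" for s using W(1) x(1) y(1) by (simp add: subspace_add subspace_scale)
  have not_parallel: "x + s *\<^sub>R y \<notin> span {x + s' *\<^sub>R y}" if "s \<noteq> s'" for s s'
  proof
    assume "x + s *\<^sub>R y \<in> span {x + s' *\<^sub>R y}"
    then obtain c where c: "x + s *\<^sub>R y = c *\<^sub>R (x + s' *\<^sub>R y)" by (auto simp: span_singleton)
    then have "inner w x = c * inner w x" using y(3) by (metis inner_add_right inner_scaleR_right mult_zero_right add_0_right)
    then have "c = 1" using chart[OF x\<Omega>] by simp
    then show False using c that y(2) by simp
  qed
  have "boundary_within W p"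
  proof -
    have "\<forall>e>0. p + e *\<^sub>R (- y) \<notin> \<Omega>"
      using on_line by (simp add: p_def algebra_simps flip: scaleR_diff_left)
    moreover have "p \<in> \<Omega> \<inter> W" using on_line[of s1] \<open>s1 < s2\<close> line_W by (simp add: p_def)
    ultimately show ?thesis using subspace_neg[OF W(1) y(1)] unfolding boundary_within_def by blast
  qed
  moreover have "boundary_within W q"
  proof -
    have "\<forall>e>0. q + e *\<^sub>R y \<notin> \<Omega>"
      using on_line by (simp add: q_def algebra_simps flip: scaleR_add_left)
    moreover have "q \<in> \<Omega> \<inter> W" using on_line[of s2] \<open>s1 < s2\<close> line_W by (simp add: q_def)
    ultimately show ?thesis using y(1) unfolding boundary_within_def by blast
  qed
  moreover have "x \<in> span {p, q}"
  proof -
    have "(s2 - s1) *\<^sub>R x = s2 *\<^sub>R p - s1 *\<^sub>R q" by (simp add: p_def q_def algebra_simps)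
    moreover have "x = (1 / (s2 - s1)) *\<^sub>R ((s2 - s1) *\<^sub>R x)" using \<open>s1 < s2\<close> by simp
    ultimately have "x = (1 / (s2 - s1)) *\<^sub>R (s2 *\<^sub>R p - s1 *\<^sub>R q)" by simp
    then show ?thesis by (metis span_base span_diff span_scale insertI1 insertI2 singletonI)
  qed
  ultimately show ?thesis
    using that not_parallel \<open>s1 < s2\<close> boundary_within_line_section[OF x\<Omega> y(1,3) W_xy on_line]
    unfolding p_def q_def by (metis less_irrefl)
qed

lemma summands_mem_of_rays:
  assumes rays: "\<And>r. r > 0 \<Longrightarrow> a + r *\<^sub>R b \<in> \<Omega>" and "a \<noteq> 0" "b \<noteq> 0"
  shows "a \<in> \<Omega>" "b \<in> \<Omega>" "inner w a * inner w b > 0"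
proof -
  have "((\<lambda>r. a + r *\<^sub>R b) \<longlongrightarrow> a) (at_right 0)" by (auto intro!: tendsto_eq_intros)
  moreover have "\<forall>\<^sub>F r in at_right 0. a + r *\<^sub>R b \<in> closure \<Omega>"
    using eventually_at_right_less[of 0] by eventually_elim (use rays closure_subset in blast)
  ultimately have "a \<in> closure \<Omega>" by (intro Lim_in_closed_set[OF closed_closure]) auto
  then show a: "a \<in> \<Omega>" using closure_mem \<open>a \<noteq> 0\<close> by blast
  have "((\<lambda>r. (1 / r) *\<^sub>R a + b) \<longlongrightarrow> 0 *\<^sub>R a + b) at_top"
    by (intro tendsto_intros tendsto_divide_0[OF tendsto_const]
        filterlim_at_top_imp_at_infinity[OF filterlim_ident])
  then have "((\<lambda>r. (1 / r) *\<^sub>R a + b) \<longlongrightarrow> b) at_top" by simp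
  moreover have "\<forall>\<^sub>F r in at_top. (1 / r) *\<^sub>R a + b \<in> closure \<Omega>"
  proof (rule eventually_mono[OF eventually_gt_at_top[of 0]])
    fix r :: real assume "r > 0"
    then have "(1 / r) *\<^sub>R (a + r *\<^sub>R b) \<in> \<Omega>" using rays scaleR_mem_iff by simp
    then show "(1 / r) *\<^sub>R a + b \<in> closure \<Omega>" using \<open>r > 0\<close> closure_subset by (auto simp: scaleR_add_right)
  qed
  ultimately have "b \<in> closure \<Omega>" by (intro Lim_in_closed_set[OF closed_closure]) auto
  then show b: "b \<in> \<Omega>" using closure_mem \<open>b \<noteq> 0\<close> by blast
  show "inner w a * inner w b > 0"
  proof (rule ccontr)
    assume "\<not> inner w a * inner w b > 0"
    moreover have "inner w a \<noteq> 0" "inner w b \<noteq> 0" using a b chart by auto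
    ultimately have "- inner w a / inner w b > 0"
      by (simp add: divide_less_0_iff mult_less_0_iff not_less le_less)
    moreover have "inner w (a + (- inner w a / inner w b) *\<^sub>R b) = 0"
      using \<open>inner w b \<noteq> 0\<close> by (simp add: inner_add_right inner_diff_right)
    ultimately show False using rays chart by blast
  qed
qed

lemma same_side_sign:
  assumes "v \<in> \<Omega>" "x \<in> \<Omega>"
  obtains c :: real where "c = 1 \<or> c = - 1" "inner w (c *\<^sub>R v) * inner w x > 0"
proof -
  have "inner w v * inner w x \<noteq> 0" using assms chart by simp
  then consider "inner w v * inner w x > 0" | "inner w v * inner w x < 0" by linarith
  then show ?thesis using that[of 1] that[of "- 1"] by cases simp_all
qed

lemma segment_through_if_dilation_invariant:
  assumes A: "subspace A" and B: "subspace B" and sum: "\<And>v. \<exists>a\<in>A. \<exists>b\<in>B. v = a + b"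
    and dilate: "\<And>a b r. a \<in> A \<Longrightarrow> b \<in> B \<Longrightarrow> a + b \<in> \<Omega> \<Longrightarrow> r > 0 \<Longrightarrow> a + r *\<^sub>R b \<in> \<Omega>"
    and a0: "a0 \<in> A \<inter> \<Omega>" and b0: "b0 \<in> B \<inter> \<Omega>" and x: "x \<in> \<Omega>"
  shows "\<exists>p q. p \<in> A \<inter> \<Omega> \<and> q \<in> B \<inter> \<Omega> \<and> open_segment p q \<subseteq> \<Omega>
           \<and> (\<exists>y\<in>closed_segment p q. \<exists>c. c \<noteq> 0 \<and> x = c *\<^sub>R y)"
proof -
  have segment: "?thesis" if "p \<in> A \<inter> \<Omega>" "q \<in> B \<inter> \<Omega>" "inner w p * inner w q > 0"
    "y \<in> closed_segment p q" "c \<noteq> 0" "x = c *\<^sub>R y" for p q y c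
    using that closed_segment_subset[of p q] open_closed_segment by blast
  obtain a b where ab: "a \<in> A" "b \<in> B" "x = a + b" using sum by blast
  consider "a \<noteq> 0" "b \<noteq> 0" | "b = 0" | "a = 0" by blast
  then show ?thesis
  proof cases
    case 1
    then have "a \<in> \<Omega>" "b \<in> \<Omega>" "inner w a * inner w b > 0"
      using summands_mem_of_rays[of a b] dilate ab x by auto
    moreover have "(1 / 2) *\<^sub>R a + (1 / 2) *\<^sub>R b \<in> closed_segment a b"
      unfolding closed_segment_def by (intro CollectI exI[of _ "1 / 2"]) simp
    moreover have "x = 2 *\<^sub>R ((1 / 2) *\<^sub>R a + (1 / 2) *\<^sub>R b)" using ab by (simp add: scaleR_add_right)
    ultimately show ?thesis using segment[of a b _ 2] ab by auto
  next
    case 2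
    obtain c where c: "c = 1 \<or> c = - 1" "inner w (c *\<^sub>R b0) * inner w x > 0"
      using same_side_sign b0 x by blast
    then have "c *\<^sub>R b0 \<in> B \<inter> \<Omega>" using b0 B scaleR_mem_iff[of c] by (auto intro: subspace_scale)
    then show ?thesis using segment[of x "c *\<^sub>R b0" x 1] ab 2 x c(2) by (simp add: mult.commute)
  next
    case 3
    obtain c where c: "c = 1 \<or> c = - 1" "inner w (c *\<^sub>R a0) * inner w x > 0"
      using same_side_sign a0 x by blast
    then have "c *\<^sub>R a0 \<in> A \<inter> \<Omega>" using a0 A scaleR_mem_iff[of c] by (auto intro: subspace_scale)
    then show ?thesis using segment[of "c *\<^sub>R a0" x x 1] ab 3 x c(2) by simp
  qed
qed

lemma reducible_if_dilation_invariant: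
  assumes "interior \<Omega> \<noteq> {}"
    and A: "subspace A" "A \<noteq> {0}" and B: "subspace B" "B \<noteq> {0}"
    and AB: "A \<inter> B = {0}" and sum: "\<And>v. \<exists>a\<in>A. \<exists>b\<in>B. v = a + b"
    and dilate: "\<And>a b r. a \<in> A \<Longrightarrow> b \<in> B \<Longrightarrow> a + b \<in> \<Omega> \<Longrightarrow> r > 0 \<Longrightarrow> a + r *\<^sub>R b \<in> \<Omega>"
  shows "reducible \<Omega>"
proof -
  obtain a b where "a \<in> A" "b \<in> B" "a \<noteq> 0" "b \<noteq> 0" "a + b \<in> interior \<Omega>"
    using open_meets_sum_with_nonzero_summands[OF open_interior assms(1) A B sum] .
  then have "a \<in> A \<inter> \<Omega>" "b \<in> B \<inter> \<Omega>"
    using summands_mem_of_rays[of a b] dilate interior_subset by blast+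
  note witness = segment_through_if_dilation_invariant[OF A(1) B(1) sum dilate this]
  have "A \<noteq> UNIV" "B \<noteq> UNIV" using AB A(2) B(2) by (metis inf_top.left_neutral inf_top.right_neutral)+
  then show ?thesis unfolding reducible_def closed
    using A B AB witness by (intro exI[of _ A] exI[of _ B] conjI ballI) simp_all
qed

end

section \<open>Linear flows and their characters\<close>

locale flow =
  fixes M :: "real \<Rightarrow> real^'n^'n"
  assumes linear_flow: "linear_flow M"
begin

lemma continuous_on_flow: "continuous_on UNIV M"
  using linear_flow by (simp add: linear_flow_def)

lemma invertible_flow: "invertible (M t)"
  using linear_flow by (simp add: linear_flow_def)

lemma flow_add:
  obtains k where "k \<noteq> 0" "M (s + t) = k *\<^sub>R (M s ** M t)"
  using linear_flow unfolding linear_flow_def by blast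

lemma flow_eq_scaled_imp_eq: "M s = c *\<^sub>R M t \<Longrightarrow> s = t"
  using linear_flow by (auto simp: linear_flow_def)

lemma inj_flow: "inj ((*v) (M t))"
proof (rule injI)
  fix u v assume "M t *v u = M t *v v"
  moreover obtain B where "B ** M t = mat 1" using invertible_flow invertible_left_inverse by blast
  ultimately show "u = v" by (metis matrix_vector_mul_assoc matrix_vector_mul_lid)
qed

lemma flow_add_vec: "M (s + t) = k *\<^sub>R (M s ** M t) \<Longrightarrow> M (s + t) *v v = k *\<^sub>R (M s *v (M t *v v))"
  by (simp add: matrix_vector_mul_assoc scaleR_matrix_vector_assoc[symmetric])

lemma flow_zero:
  obtains \<mu> where "\<mu> \<noteq> 0" "M 0 = \<mu> *\<^sub>R mat 1"
proof -
  obtain k where k: "k \<noteq> 0" "M (0 + 0) = k *\<^sub>R (M 0 ** M 0)" using flow_add .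
  obtain B where B: "M 0 ** B = mat 1" using invertible_flow invertible_right_inverse by blast
  have "mat 1 = k *\<^sub>R (M 0 ** M 0) ** B" using k B by simp
  also have "\<dots> = k *\<^sub>R M 0" using B by (simp add: matrix_mul_assoc[symmetric] scalar_matrix_assoc[symmetric])
  finally have "M 0 = (1 / k) *\<^sub>R mat 1" using k by simp
  then show ?thesis using that[of "1 / k"] k by simp
qed

definition orbit_span :: "real^'n \<Rightarrow> (real^'n) set" where
  "orbit_span v = span (range (\<lambda>t. M t *v v))"

lemma subspace_orbit_span: "subspace (orbit_span v)"
  unfolding orbit_span_def by (rule subspace_span)

lemma mem_orbit_span: "v \<in> orbit_span v"
proof -
  obtain \<mu> where "\<mu> \<noteq> 0" "M 0 = \<mu> *\<^sub>R mat 1" using flow_zero .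
  then have "v = (1 / \<mu>) *\<^sub>R (M 0 *v v)" by (simp add: scaleR_matrix_vector_assoc[symmetric])
  then show ?thesis unfolding orbit_span_def by (metis rangeI span_base span_scale)
qed

lemma orbit_span_invariant:
  assumes "u \<in> orbit_span v" shows "M s *v u \<in> orbit_span v"
proof -
  have "M s *v (M t *v v) \<in> orbit_span v" for t
  proof -
    obtain k where "k \<noteq> 0" "M (s + t) = k *\<^sub>R (M s ** M t)" using flow_add .
    then have "M s *v (M t *v v) = (1 / k) *\<^sub>R (M (s + t) *v v)" using flow_add_vec by simp
    then show ?thesis unfolding orbit_span_def by (metis rangeI span_base span_scale)
  qed
  then have "(*v) (M s) ` range (\<lambda>t. M t *v v) \<subseteq> orbit_span v" by blast
  then have "span ((*v) (M s) ` range (\<lambda>t. M t *v v)) \<subseteq> orbit_span v"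
    unfolding orbit_span_def by (simp add: span_minimal)
  then show ?thesis using assms span_linear_image[OF matrix_vector_mul_linear]
    unfolding orbit_span_def by blast
qed

lemma dim_orbit_span_le: "dim (orbit_span v) \<le> 2"
proof (cases "v = 0")
  case True
  then show ?thesis by (simp add: orbit_span_def image_constant_conv dim_span)
next
  case False
  then obtain W where W: "subspace W" "dim W = 2" "{c *\<^sub>R (M t *v v) | c t. c \<noteq> 0} \<subset> W - {0}"
    using linear_flow unfolding linear_flow_def by blast
  have "M t *v v \<in> W" for t using W(3) by (force dest: psubset_imp_subset)
  then have "range (\<lambda>t. M t *v v) \<subseteq> W" by blast
  then have "orbit_span v \<subseteq> W" unfolding orbit_span_def using W(1) by (rule span_minimal)
  then have "dim (orbit_span v) \<le> dim W" by (rule dim_subset)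
  then show ?thesis using W(2) by simp
qed

definition char_space :: "(real \<Rightarrow> real) \<Rightarrow> (real^'n) set" where
  "char_space c = {v. \<forall>t. M t *v v = c t *\<^sub>R v}"

definition common_eigenvector :: "real^'n \<Rightarrow> bool" where
  "common_eigenvector e \<longleftrightarrow> e \<noteq> 0 \<and> (\<exists>c. e \<in> char_space c)"

lemma subspace_char_space: "subspace (char_space c)"
  unfolding subspace_def char_space_def
  by (simp add: matrix_vector_right_distrib matrix_vector_mult_scaleR scaleR_add_right)

lemma char_space_char_eq:
  assumes "e \<in> char_space c" "e \<in> char_space c'" "e \<noteq> 0" shows "c = c'"
proof
  fix t
  have "M t *v e = c t *\<^sub>R e" "M t *v e = c' t *\<^sub>R e" using assms(1,2) unfolding char_space_def by blast+
  then show "c t = c' t" using assms(3) scaleR_cancel_right by metis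
qed

lemma char_nonzero:
  assumes "e \<in> char_space c" "e \<noteq> 0" shows "c t \<noteq> 0"
proof
  assume "c t = 0"
  then have "M t *v e = M t *v 0" using assms(1) by (simp add: char_space_def)
  then show False using assms(2) inj_flow by (metis injD)
qed

lemma char_add:
  assumes "M (s + t) = k *\<^sub>R (M s ** M t)" "e \<in> char_space c" "e \<noteq> 0"
  shows "c (s + t) = k * c s * c t"
proof -
  have e: "M r *v e = c r *\<^sub>R e" for r using assms(2) by (simp add: char_space_def)
  have "c (s + t) *\<^sub>R e = k *\<^sub>R (M s *v (M t *v e))" using flow_add_vec[OF assms(1)] e by metis
  also have "\<dots> = (k * c s * c t) *\<^sub>R e" by (simp add: e matrix_vector_mult_scaleR)
  finally have "(c (s + t) - k * c s * c t) *\<^sub>R e = 0" by (simp add: scaleR_diff_left)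
  then show ?thesis using assms(3) by simp
qed

lemma char_ratio_add:
  assumes "e1 \<in> char_space c1" "e1 \<noteq> 0" "e2 \<in> char_space c2" "e2 \<noteq> 0"
  shows "c2 (s + t) / c1 (s + t) = c2 s / c1 s * (c2 t / c1 t)"
proof -
  obtain k where "k \<noteq> 0" "M (s + t) = k *\<^sub>R (M s ** M t)" using flow_add .
  then show ?thesis using char_add[of s t k, OF _ assms(1,2)] char_add[of s t k, OF _ assms(3,4)]
      char_nonzero[OF assms(1,2)] by simp
qed

lemma continuous_on_char:
  assumes "e \<in> char_space c" "e \<noteq> 0" shows "continuous_on UNIV c"
proof -
  obtain i where i: "e $ i \<noteq> 0" using assms(2) vec_eq_iff[of e 0] by auto
  have "c = (\<lambda>t. (M t *v e) $ i / e $ i)" using assms(1) i by (auto simp: char_space_def)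
  moreover have "continuous_on UNIV (\<lambda>t. (M t *v e) $ i / e $ i)"
    unfolding matrix_vector_mult_def
    using i by (intro continuous_intros continuous_on_component continuous_on_flow) auto
  ultimately show ?thesis by simp
qed

lemma char_ratio_exp:
  assumes "e1 \<in> char_space c1" "e1 \<noteq> 0" "e2 \<in> char_space c2" "e2 \<noteq> 0"
  obtains \<kappa> where "\<And>t. c2 t = exp (\<kappa> * t) * c1 t"
proof -
  have nz: "c1 t \<noteq> 0" "c2 t \<noteq> 0" for t using assms char_nonzero by blast+
  have "continuous_on UNIV (\<lambda>t. c2 t / c1 t)"
    using continuous_on_char assms nz by (intro continuous_intros) auto
  then obtain \<kappa> where "c2 t / c1 t = exp (\<kappa> * t)" for t
    using continuous_multiplicative_eq_exp[of "\<lambda>t. c2 t / c1 t"] char_ratio_add[OF assms] nz by auto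
  then have "c2 t = exp (\<kappa> * t) * c1 t" for t using nz(1)[of t] by (simp add: divide_eq_eq)
  then show ?thesis by (rule that)
qed

lemma char_space_independent2:
  assumes e: "e1 \<in> char_space c1" "e1 \<noteq> 0" "e2 \<in> char_space c2" "e2 \<noteq> 0"
    and "c1 \<noteq> c2" and z: "a1 *\<^sub>R e1 + a2 *\<^sub>R e2 = 0"
  shows "a1 = 0 \<and> a2 = 0"
proof -
  obtain t where t: "c1 t \<noteq> c2 t" using \<open>c1 \<noteq> c2\<close> by blast
  have "M t *v (a1 *\<^sub>R e1 + a2 *\<^sub>R e2) - c2 t *\<^sub>R (a1 *\<^sub>R e1 + a2 *\<^sub>R e2) = 0" using z by simp
  then have "(a1 * (c1 t - c2 t)) *\<^sub>R e1 = 0"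
    using e(1,3) by (simp add: char_space_def matrix_vector_right_distrib matrix_vector_mult_scaleR algebra_simps)
  then have "a1 = 0" using e(2) t by simp
  then show ?thesis using z e(4) by simp
qed

lemma char_space_independent3:
  assumes e: "e1 \<in> char_space c1" "e1 \<noteq> 0" "e2 \<in> char_space c2" "e2 \<noteq> 0"
    "e3 \<in> char_space c3" "e3 \<noteq> 0"
    and c: "c1 \<noteq> c2" "c1 \<noteq> c3" "c2 \<noteq> c3"
    and z: "a1 *\<^sub>R e1 + a2 *\<^sub>R e2 + a3 *\<^sub>R e3 = 0"
  shows "a1 = 0 \<and> a2 = 0 \<and> a3 = 0"
proof -
  have "a1 * (c1 t - c3 t) = 0 \<and> a2 * (c2 t - c3 t) = 0" for t
  proof -
    have "M t *v (a1 *\<^sub>R e1 + a2 *\<^sub>R e2 + a3 *\<^sub>R e3) - c3 t *\<^sub>R (a1 *\<^sub>R e1 + a2 *\<^sub>R e2 + a3 *\<^sub>R e3) = 0"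
      using z by simp
    then have "(a1 * (c1 t - c3 t)) *\<^sub>R e1 + (a2 * (c2 t - c3 t)) *\<^sub>R e2 = 0"
      using e(1,3,5) by (simp add: char_space_def matrix_vector_right_distrib matrix_vector_mult_scaleR algebra_simps)
    then show ?thesis using char_space_independent2[OF e(1-4) c(1)] by blast
  qed
  moreover obtain t1 t2 where "c1 t1 \<noteq> c3 t1" "c2 t2 \<noteq> c3 t2" using c(2,3) by blast
  ultimately have "a1 = 0" "a2 = 0" by (metis mult_eq_0_iff right_minus_eq)+
  then show ?thesis using z e(6) by simp
qed

text \<open>The orbit of \<open>e1 + e2 + e3\<close> lies in a plane, so \<open>v\<close>, \<open>M s v\<close>, \<open>M t v\<close> satisfy a
  common linear relation, which reads off coordinatewise as a collinearity of characters.\<close>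
lemma chars_collinear:
  assumes e: "e1 \<in> char_space c1" "e1 \<noteq> 0" "e2 \<in> char_space c2" "e2 \<noteq> 0"
    "e3 \<in> char_space c3" "e3 \<noteq> 0"
    and c: "c1 \<noteq> c2" "c1 \<noteq> c3" "c2 \<noteq> c3"
  shows "(c2 s - c1 s) * (c3 t - c1 t) = (c3 s - c1 s) * (c2 t - c1 t)"
proof -
  define v where "v = e1 + e2 + e3"
  have Me: "M t *v e1 = c1 t *\<^sub>R e1" "M t *v e2 = c2 t *\<^sub>R e2" "M t *v e3 = c3 t *\<^sub>R e3" for t
    using e(1,3,5) by (simp_all add: char_space_def)
  obtain a b c where abc: "(a, b, c) \<noteq> (0, 0, 0)"
    and "a *\<^sub>R v + b *\<^sub>R (M s *v v) + c *\<^sub>R (M t *v v) = 0"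
    using three_vectors_dependent[OF dim_orbit_span_le] orbit_span_invariant mem_orbit_span by metis
  then have "(a + b * c1 s + c * c1 t) *\<^sub>R e1 + (a + b * c2 s + c * c2 t) *\<^sub>R e2
      + (a + b * c3 s + c * c3 t) *\<^sub>R e3 = 0"
    by (simp add: Me v_def matrix_vector_right_distrib algebra_simps)
  then have "a + b * c1 s + c * c1 t = 0" "a + b * c2 s + c * c2 t = 0" "a + b * c3 s + c * c3 t = 0"
    using char_space_independent3[OF e c] by blast+
  then show ?thesis using collinear_of_common_affine_relation abc by blast
qed

lemma no_three_characters:
  assumes e: "e1 \<in> char_space c1" "e1 \<noteq> 0" "e2 \<in> char_space c2" "e2 \<noteq> 0"
    "e3 \<in> char_space c3" "e3 \<noteq> 0"
    and c: "c1 \<noteq> c2" "c1 \<noteq> c3" "c2 \<noteq> c3"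
  shows False
proof -
  have nz: "c1 t \<noteq> 0" for t using char_nonzero e(1,2) by blast
  define f where "f t = c2 t / c1 t" for t
  define g where "g t = c3 t / c1 t" for t
  obtain s0 where "c1 s0 \<noteq> c2 s0" using c(1) by blast
  have "(\<forall>t. g t = 1) \<or> (\<forall>t. g t = f t)"
  proof (rule multiplicative_proportional_cases[where u = s0])
    show "f (s + t) = f s * f t" "g (s + t) = g s * g t" for s t
      unfolding f_def g_def using char_ratio_add e by blast+
    show "(f s - 1) * (g t - 1) = (g s - 1) * (f t - 1)" for s t
      using chars_collinear[OF e c, of s t] nz[of s] nz[of t] by (simp add: f_def g_def field_simps)
    show "f s0 \<noteq> 1" using \<open>c1 s0 \<noteq> c2 s0\<close> nz[of s0] by (simp add: f_def)
  qed
  then show False using c(2,3) nz by (auto simp: f_def g_def fun_eq_iff)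
qed

lemma char_space_ne_UNIV: "char_space c \<noteq> UNIV"
proof
  assume "char_space c = UNIV"
  then have Mc: "M t *v v = c t *\<^sub>R v" for t v by (auto simp: char_space_def)
  have "c 0 \<noteq> 0" using char_nonzero[of 1 c] Mc by (simp add: char_space_def)
  then have "M 1 = (c 1 / c 0) *\<^sub>R M 0" by (simp add: Mc matrix_eq scaleR_matrix_vector_assoc[symmetric])
  then show False using flow_eq_scaled_imp_eq[of 1 "c 1 / c 0" 0] by simp
qed

lemma dim_orbit_span_eq_2:
  assumes "v \<noteq> 0" "\<not> common_eigenvector v" shows "dim (orbit_span v) = 2"
proof -
  have "\<exists>t. M t *v v \<notin> span {v}"
  proof (rule ccontr)
    assume "\<nexists>t. M t *v v \<notin> span {v}"
    then have "\<forall>t. \<exists>l. M t *v v = l *\<^sub>R v" by (auto simp: span_singleton)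
    then obtain c where "\<And>t. M t *v v = c t *\<^sub>R v" by metis
    then show False using assms by (auto simp: common_eigenvector_def char_space_def)
  qed
  then obtain t0 where t0: "M t0 *v v \<notin> span {v}" by blast
  have "independent {M t0 *v v, v}" using t0 assms(1) by (simp add: independent_insert)
  moreover have "{M t0 *v v, v} \<subseteq> orbit_span v" using orbit_span_invariant mem_orbit_span by blast
  ultimately have "card {M t0 *v v, v} \<le> dim (orbit_span v)" by (intro independent_card_le_dim)
  moreover have "M t0 *v v \<noteq> v" using t0 span_base by blast
  then have "card {M t0 *v v, v} = 2" by simp
  ultimately show ?thesis using dim_orbit_span_le[of v] by simp
qed

lemma common_eigenvector_of_preserved_lines:
  assumes pq: "p \<notin> span {q}" "q \<notin> span {p}"
    and lines: "\<And>s. M s *v p \<in> span {p} \<union> span {q}" "\<And>s. M s *v q \<in> span {p} \<union> span {q}"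
  shows "common_eigenvector p"
proof -
  have "M s *v p \<in> span {p}" for s
  proof -
    obtain k where k: "k \<noteq> 0" "M (s/2 + s/2) = k *\<^sub>R (M (s/2) ** M (s/2))" using flow_add .
    have "M (s/2) *v (M (s/2) *v p) \<in> span {p}"
      using linear_inj_square_preserves_line[OF matrix_vector_mul_linear inj_flow pq lines] .
    moreover have "M s *v p = k *\<^sub>R (M (s/2) *v (M (s/2) *v p))" using flow_add_vec[OF k(2)] by simp
    ultimately show ?thesis by (simp add: span_scale)
  qed
  then have "\<forall>s. \<exists>l. M s *v p = l *\<^sub>R p" by (auto simp: span_singleton)
  then obtain c where "\<And>s. M s *v p = c s *\<^sub>R p" by metis
  moreover have "p \<noteq> 0" using pq(1) span_zero by blast
  ultimately show ?thesis unfolding common_eigenvector_def char_space_def by blast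
qed

lemma two_characters:
  assumes span: "span (Collect common_eigenvector) = UNIV"
  obtains c1 c2 where "c1 \<noteq> c2" "char_space c1 \<noteq> {0}" "char_space c2 \<noteq> {0}"
    "\<And>v. \<exists>a\<in>char_space c1. \<exists>b\<in>char_space c2. v = a + b"
proof -
  have "span {} \<noteq> (UNIV :: (real^'n) set)"
    using span_empty zero_neq_one[where 'a = "real^'n"] by (metis UNIV_I singletonD)
  then have "Collect common_eigenvector \<noteq> {}" using span by force
  then obtain e1 c1 where e1: "e1 \<in> char_space c1" "e1 \<noteq> 0"
    unfolding common_eigenvector_def by blast
  have "\<not> Collect common_eigenvector \<subseteq> char_space c1"
    using span span_minimal[OF _ subspace_char_space] char_space_ne_UNIV by (metis top.extremum_unique)
  then obtain e2 c2 where e2: "e2 \<in> char_space c2" "e2 \<noteq> 0" "e2 \<notin> char_space c1"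
    unfolding common_eigenvector_def by blast
  have "c1 \<noteq> c2" using e2 by blast
  define S where "S = {a + b | a b. a \<in> char_space c1 \<and> b \<in> char_space c2}"
  have "Collect common_eigenvector \<subseteq> S"
  proof
    fix e assume "e \<in> Collect common_eigenvector"
    then obtain c where e: "e \<in> char_space c" "e \<noteq> 0" by (auto simp: common_eigenvector_def)
    then have "c = c1 \<or> c = c2" using no_three_characters[OF e1 e2(1,2) e] \<open>c1 \<noteq> c2\<close> by blast
    moreover have "0 \<in> char_space c1" "0 \<in> char_space c2" by (simp_all add: char_space_def)
    ultimately show "e \<in> S" unfolding S_def using e(1)
      by (metis (mono_tags, lifting) CollectI add.right_neutral add_0)
  qed
  then have "span (Collect common_eigenvector) \<subseteq> S"
    unfolding S_def by (rule span_minimal[OF _ subspace_sums[OF subspace_char_space subspace_char_space]])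
  then have "\<exists>a\<in>char_space c1. \<exists>b\<in>char_space c2. v = a + b" for v
    using span unfolding S_def by blast
  moreover have "char_space c1 \<noteq> {0}" "char_space c2 \<noteq> {0}" using e1 e2 by blast+
  ultimately show ?thesis using that \<open>c1 \<noteq> c2\<close> by blast
qed

lemma char_space_Int:
  assumes "c1 \<noteq> c2" shows "char_space c1 \<inter> char_space c2 = {0}"
  using char_space_char_eq assms subspace_0[OF subspace_char_space] by blast

lemma char_ratio_exp_nonzero:
  assumes "c1 \<noteq> c2" "char_space c1 \<noteq> {0}" "char_space c2 \<noteq> {0}"
  obtains \<kappa> where "\<kappa> \<noteq> 0" "\<And>t. c2 t = exp (\<kappa> * t) * c1 t" "\<And>t. c1 t \<noteq> 0"
proof -
  obtain e1 e2 where e: "e1 \<in> char_space c1" "e1 \<noteq> 0" "e2 \<in> char_space c2" "e2 \<noteq> 0"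
    using assms(2,3) subspace_0[OF subspace_char_space] by blast
  obtain \<kappa> where \<kappa>: "\<And>t. c2 t = exp (\<kappa> * t) * c1 t" using char_ratio_exp[OF e] by blast
  moreover have "\<kappa> \<noteq> 0" using \<kappa> assms(1) by auto
  ultimately show ?thesis using that char_nonzero[OF e(1,2)] by blast
qed

lemma hyperbolic_of_char_splitting:
  assumes "c1 \<noteq> c2" "char_space c1 \<noteq> {0}" "char_space c2 \<noteq> {0}"
    and sum: "\<And>v. \<exists>a\<in>char_space c1. \<exists>b\<in>char_space c2. v = a + b"
  shows "hyperbolic_flow M"
proof -
  obtain \<kappa> where \<kappa>: "\<kappa> \<noteq> 0" "\<And>t. c2 t = exp (\<kappa> * t) * c1 t" "\<And>t. c1 t \<noteq> 0"
    using char_ratio_exp_nonzero[OF assms(1-3)] by blast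
  have flow_split: "M (t / \<kappa>) *v (a + b) = c1 (t / \<kappa>) *\<^sub>R (a + exp t *\<^sub>R b)"
    if "a \<in> char_space c1" "b \<in> char_space c2" for t a b
    using that \<kappa>(1,2) by (simp add: char_space_def matrix_vector_right_distrib scaleR_add_right)
  have "{a + b | a b. a \<in> char_space c1 \<and> b \<in> char_space c2} = UNIV" using sum by blast
  note splitting = this flow_split \<kappa>(1,3) char_space_Int[OF assms(1)]
  show ?thesis unfolding hyperbolic_flow_def
    by (rule exI[of _ "1 / \<kappa>"], rule exI[of _ "char_space c1"], rule exI[of _ "char_space c2"])
      (use splitting in \<open>auto simp: subspace_char_space\<close>)
qed

end

section \<open>Flows preserving a closed properly convex domain\<close>

locale flow_domain = flow M + properly_convex_cone \<Omega> w
  for M :: "real \<Rightarrow> real^'n^'n" and \<Omega> :: "(real^'n) set" and w :: "real^'n" +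
  assumes interior_nonempty: "interior \<Omega> \<noteq> {}" and preserves: "preserves M \<Omega>"
begin

lemma flow_mem_iff: "M t *v v \<in> \<Omega> \<longleftrightarrow> v \<in> \<Omega>"
proof -
  have "(*v) (M t) ` \<Omega> = \<Omega>" using preserves by (simp add: preserves_def)
  then show ?thesis using inj_flow[of t] by (metis inj_image_mem_iff)
qed

lemma boundary_within_invariant:
  assumes W: "\<And>u. u \<in> W \<Longrightarrow> M s *v u \<in> W" and v: "boundary_within W v"
  shows "boundary_within W (M s *v v)"
proof -
  obtain u where u: "u \<in> W" "\<And>e. e > 0 \<Longrightarrow> v + e *\<^sub>R u \<notin> \<Omega>"
    using v by (auto simp: boundary_within_def)
  have "M s *v v + e *\<^sub>R (M s *v u) \<notin> \<Omega>" if "e > 0" for e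
    using u(2)[OF that] flow_mem_iff[of s "v + e *\<^sub>R u"]
    by (simp add: matrix_vector_right_distrib matrix_vector_mult_scaleR)
  then show ?thesis using v W u(1) flow_mem_iff by (auto simp: boundary_within_def)
qed

lemma interior_subset_span_common_eigenvectors:
  assumes x: "x \<in> interior \<Omega>" shows "x \<in> span (Collect common_eigenvector)"
proof (cases "common_eigenvector x")
  case True
  then show ?thesis by (simp add: span_base)
next
  case False
  define W where "W = orbit_span x"
  have W: "subspace W" "\<And>s u. u \<in> W \<Longrightarrow> M s *v u \<in> W" "x \<in> W"
    by (simp_all add: W_def subspace_orbit_span orbit_span_invariant mem_orbit_span)
  have "x \<noteq> 0" using x interior_subset zero_not_mem by blast
  then have "dim W = 2" using False by (simp add: W_def dim_orbit_span_eq_2)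
  then obtain p q where pq: "p \<notin> span {q}" "q \<notin> span {p}" "x \<in> span {p, q}"
    "boundary_within W p" "boundary_within W q"
    and boundary: "\<And>v. boundary_within W v \<Longrightarrow> v \<in> span {p} \<union> span {q}"
    using planar_section_boundary[OF W(1) _ W(3) x] by blast
  have lines: "M s *v p \<in> span {p} \<union> span {q}" "M s *v q \<in> span {q} \<union> span {p}" for s
    using boundary[OF boundary_within_invariant[OF W(2) pq(4)]]
      boundary[OF boundary_within_invariant[OF W(2) pq(5)]] by auto
  have "common_eigenvector p" "common_eigenvector q"
    using common_eigenvector_of_preserved_lines[OF pq(1,2)] common_eigenvector_of_preserved_lines[OF pq(2,1)]
      lines by (auto simp: Un_commute)
  then have "span {p, q} \<subseteq> span (Collect common_eigenvector)" by (intro span_mono) auto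
  then show ?thesis using pq(3) by blast
qed

lemma span_common_eigenvectors: "span (Collect common_eigenvector) = UNIV"
proof -
  have "dim (interior \<Omega>) = dim (UNIV :: (real^'n) set)"
    using dim_openin[OF _ subspace_UNIV interior_nonempty] by (simp add: open_openin[symmetric])
  then have "span (interior \<Omega>) = UNIV" using dim_eq_full dim_UNIV by metis
  moreover have "span (interior \<Omega>) \<subseteq> span (Collect common_eigenvector)"
    using interior_subset_span_common_eigenvectors by (intro span_minimal) auto
  ultimately show ?thesis by blast
qed

lemma reducible_of_char_splitting:
  assumes "c1 \<noteq> c2" "char_space c1 \<noteq> {0}" "char_space c2 \<noteq> {0}"
    and sum: "\<And>v. \<exists>a\<in>char_space c1. \<exists>b\<in>char_space c2. v = a + b"
  shows "reducible \<Omega>"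
proof (rule reducible_if_dilation_invariant[OF interior_nonempty subspace_char_space assms(2)
      subspace_char_space assms(3) char_space_Int[OF assms(1)] sum])
  obtain \<kappa> where \<kappa>: "\<kappa> \<noteq> 0" "\<And>t. c2 t = exp (\<kappa> * t) * c1 t" "\<And>t. c1 t \<noteq> 0"
    using char_ratio_exp_nonzero[OF assms(1-3)] by blast
  fix a b and r :: real
  assume ab: "a \<in> char_space c1" "b \<in> char_space c2" "a + b \<in> \<Omega>" and "r > 0"
  define t where "t = ln r / \<kappa>"
  have "M t *v (a + b) = c1 t *\<^sub>R (a + r *\<^sub>R b)"
    using ab(1,2) \<kappa>(1,2) \<open>r > 0\<close> by (simp add: t_def char_space_def matrix_vector_right_distrib scaleR_add_right)
  moreover have "M t *v (a + b) \<in> \<Omega>" using flow_mem_iff ab(3) by blast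
  ultimately show "a + r *\<^sub>R b \<in> \<Omega>" using scaleR_mem_iff[OF \<kappa>(3)] by simp
qed

end

theorem lemma1p4:
  fixes \<Omega> :: "(real^'n) set" and M :: "real \<Rightarrow> real^'n^'n"
  assumes "closed_properly_convex_domain \<Omega>"
    and "linear_flow M"
    and "preserves M \<Omega>"
  shows "reducible \<Omega> \<and> hyperbolic_flow M"
proof -
  have closed: "proj_closure \<Omega> = \<Omega>"
    using assms(1) by (simp add: closed_properly_convex_domain_def)
  obtain w where "\<forall>v\<in>\<Omega>. inner w v \<noteq> 0" "compact {v \<in> \<Omega>. inner w v = 1}" "convex {v \<in> \<Omega>. inner w v = 1}"
    using assms(1) unfolding closed_properly_convex_domain_def properly_convex_def closed by blast
  then interpret flow_domain M \<Omega> w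
    using assms closed by unfold_locales (auto simp: closed_properly_convex_domain_def)
  obtain c1 c2 where split: "c1 \<noteq> c2" "char_space c1 \<noteq> {0}" "char_space c2 \<noteq> {0}"
    "\<And>v. \<exists>a\<in>char_space c1. \<exists>b\<in>char_space c2. v = a + b"
    using two_characters[OF span_common_eigenvectors] by blast
  show ?thesis using reducible_of_char_splitting[OF split] hyperbolic_of_char_splitting[OF split] by blast
qed

end
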